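(* Define, for $n\ge 0$, $E_{2n+1}(p,q)=\sum_{\sigma\in\mathfrak{A}_{2n+1}}p^{(2\text{-}13)\sigma}q^{(31\text{-}2)\sigma}$ and $E_{2n}(p,q)=\sum_{\sigma\in\mathfrak{A}_{2n}}p^{(2\text{-}31)\sigma}q^{(31\text{-}2)\sigma}$ (with $E_0(p,q)=1$). Then, as formal power series in $t$, $$\sum_{n=0}^{\infty} E_{2n+1}(p,q) t^{2n+1} =\cfrac{t}{1-\cfrac{[1]_{p,q}[2]_{p,q}t^2}{1-\cfrac{[2]_{p,q}[3]_{p,q}t^2}{1-\cfrac{[3]_{p,q}[4]_{p,q}t^2}{\ddots}}}}, \qquad \sum_{n=0}^{\infty} E_{2n}(p,q) t^{2n} =\cfrac{1}{1-\cfrac{[1]_{p,q}^2t^2}{1-\cfrac{[2]_{p,q}^2t^2}{1-\cfrac{[3]_{p,q}^2t^2}{\ddots}}}},$$ where $[n]_{p,q}=(p^n-q^n)/(p-q)=\sum_{i=0}^{n-1}p^iq^{n-1-i}$.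
   Context: $\mathfrak{A}_m$ is the set of falling alternating permutations $\sigma=\sigma_1\cdots\sigma_m$ of $\{1,\dots,m\}$, i.e. $\sigma_1>\sigma_2<\sigma_3>\sigma_4<\cdots$. For such $\sigma$: $(31\text{-}2)\sigma=\#\{(i,j): i+1<j,\ \sigma_i>\sigma_j>\sigma_{i+1}\}$; $(2\text{-}31)\sigma=\#\{(i,j): j<i-1,\ \sigma_{i-1}>\sigma_j>\sigma_i\}$; $(2\text{-}13)\sigma=\#\{(i,j): j<i-1,\ \sigma_{i-1}<\sigma_j<\sigma_i\}$. *)

theory Defs
  imports Main "HOL-Computational_Algebra.Formal_Power_Series"
begin

text \<open>Permutations of {1..m} are represented as lists (one-line notation);
 positions are 0-based in Isabelle (list index i corresponds to sigma_(i+1)).\<close>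

definition falling_alt :: "nat list \<Rightarrow> bool" where
  "falling_alt s \<longleftrightarrow> (\<forall>i. Suc i < length s \<longrightarrow>
      (if even i then s ! i > s ! Suc i else s ! i < s ! Suc i))"

definition alt_perms :: "nat \<Rightarrow> nat list set" where
  "alt_perms m = {s. distinct s \<and> set s = {1..m} \<and> falling_alt s}"

definition pat_31_2 :: "nat list \<Rightarrow> nat" where
  "pat_31_2 s = card {(i,j). Suc i < j \<and> j < length s \<and> s ! i > s ! j \<and> s ! j > s ! Suc i}"

definition pat_2_31 :: "nat list \<Rightarrow> nat" where
  "pat_2_31 s = card {(i,j). Suc j < i \<and> i < length s \<and> s ! (i - 1) > s ! j \<and> s ! j > s ! i}"

definition pat_2_13 :: "nat list \<Rightarrow> nat" where
  "pat_2_13 s = card {(i,j). Suc j < i \<and> i < length s \<and> s ! (i - 1) < s ! j \<and> s ! j < s ! i}"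

definition E :: "nat \<Rightarrow> 'a::comm_ring_1 \<Rightarrow> 'a \<Rightarrow> 'a" where
  "E m p q = (if odd m
     then (\<Sum>s\<in>alt_perms m. p ^ pat_2_13 s * q ^ pat_31_2 s)
     else (\<Sum>s\<in>alt_perms m. p ^ pat_2_31 s * q ^ pat_31_2 s))"

definition qint :: "nat \<Rightarrow> 'a::comm_ring_1 \<Rightarrow> 'a \<Rightarrow> 'a" where
  "qint n p q = (\<Sum>i<n. p ^ i * q ^ (n - 1 - i))"

fun cf_tail :: "(nat \<Rightarrow> 'a::field) \<Rightarrow> nat \<Rightarrow> nat \<Rightarrow> 'a fps" where
  "cf_tail c 0 j = 1"
| "cf_tail c (Suc k) j = 1 - fps_const (c j) * fps_X ^ 2 * inverse (cf_tail c k (Suc j))"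

text \<open>The k-th convergent of 1/(1 - c_0 t^2/(1 - c_1 t^2/(1 - ...)));
  the infinite continued fraction is the limit of these in the fps metric.\<close>
definition cf_conv :: "(nat \<Rightarrow> 'a::field) \<Rightarrow> nat \<Rightarrow> 'a fps" where
  "cf_conv c k = inverse (cf_tail c k 0)"

end

theory Submission
  imports Defs "HOL-Library.Extended_Nat"
begin

(* Both sides are Stieltjes continued fractions, so by Flajolet's correspondence it suffices to
   realise E_m(p,q) as a weighted count of Dyck-type paths whose steps between heights h and h+1
   carry the weights [h]_{p,q} and [h+1]_{p,q} (odd case), resp. [h]_{p,q} twice (even case).

   Alternating permutations are grown by inserting the letters 1, 2, 3, ... in increasing order into
   words over {1,...,n} and the symbol \<infinity>, each \<infinity> marking a slot where a larger letter will go.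
   The new largest letter either replaces a slot \<infinity> (it becomes a peak and the number of slots
   drops by one) or replaces it by \<infinity> x \<infinity> (a valley, one slot more). Every slot to its left,
   resp. right, then yields exactly one new occurrence of 31-2, resp. of the reversed pattern, so
   choosing among k slots contributes q^s p^(k-1-s) summed over s, i.e. [k]_{p,q}. The number of
   slots traces the path, and the path recurrence is solved by the continued fraction. *)

unbundle fps_syntax

section \<open>Stieltjes continued fractions of formal power series\<close>

text \<open>The tail \<open>1/(1 - c\<^sub>j t\<^sup>2/(1 - c\<^sub>j\<^sub>+\<^sub>1 t\<^sup>2/(1 - \<dots>)))\<close> is the power series \<open>S\<^sub>j\<close> solving
  \<open>S\<^sub>j = 1 + c\<^sub>j t\<^sup>2 S\<^sub>j\<^sub>+\<^sub>1 S\<^sub>j\<close>; this equation determines its coefficients recursively.\<close>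

function cf_coeff :: "(nat \<Rightarrow> 'a::field) \<Rightarrow> nat \<Rightarrow> nat \<Rightarrow> 'a" where
  "cf_coeff c j n = (if n = 0 then 1 else if n = 1 then 0
      else c j * (\<Sum>i\<le>n-2. cf_coeff c (Suc j) i * cf_coeff c j (n - 2 - i)))"
  by auto
termination by (relation "measure (\<lambda>(c,j,n). n)") auto

declare cf_coeff.simps[simp del]

definition cf_fps :: "(nat \<Rightarrow> 'a::field) \<Rightarrow> nat \<Rightarrow> 'a fps" where
  "cf_fps c j = Abs_fps (cf_coeff c j)"

lemma cf_fps_eq: "cf_fps c j = 1 + fps_const (c j) * (fps_X^2 * (cf_fps c (Suc j) * cf_fps c j))"
proof (rule fps_ext)
  fix n
  show "cf_fps c j $ n = (1 + fps_const (c j) * (fps_X^2 * (cf_fps c (Suc j) * cf_fps c j))) $ n"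
  proof (cases "n < 2")
    case True
    then show ?thesis
      by (auto simp: cf_fps_def fps_X_power_mult_nth cf_coeff.simps[of c j n] less_2_cases_iff)
  next
    case False
    then show ?thesis
      by (simp add: cf_fps_def fps_X_power_mult_nth cf_coeff.simps[of c j n])
         (simp add: fps_mult_nth atLeast0AtMost)
  qed
qed

lemma cf_fps_mult_eq_1: "cf_fps c j * (1 - fps_const (c j) * fps_X^2 * cf_fps c (Suc j)) = 1"
proof -
  have "cf_fps c j * (1 - fps_const (c j) * fps_X^2 * cf_fps c (Suc j))
      = cf_fps c j - fps_const (c j) * (fps_X^2 * (cf_fps c (Suc j) * cf_fps c j))"
    by (simp add: algebra_simps)
  also have "\<dots> = 1" using cf_fps_eq[of c j] by (metis add_diff_cancel_right')
  finally show ?thesis .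
qed

lemma inverse_fps_nth_eq:
  fixes f g :: "'a::field fps"
  assumes agree: "\<forall>i<N. f $ i = g $ i" and f0: "f $ 0 \<noteq> 0" and n: "n < N"
  shows "inverse f $ n = inverse g $ n"
proof -
  have "g $ 0 \<noteq> 0" using agree f0 n by auto
  then have "inverse f - inverse g = inverse f * inverse g * (g - f)"
    using f0 by (simp add: algebra_simps inverse_mult_eq_1 inverse_mult_eq_1')
  moreover have "(inverse f * inverse g * (g - f)) $ n = 0"
    using agree n by (auto simp: fps_mult_nth intro!: sum.neutral)
  ultimately show ?thesis by (metis diff_eq_eq fps_sub_nth eq_iff_diff_eq_0)
qed

lemma inverse_cf_tail_nth:
  fixes H :: "nat \<Rightarrow> 'a::field fps"
  assumes H: "\<And>j. H j * (1 - fps_const (c j) * fps_X^2 * H (Suc j)) = 1"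
    and n: "n < 2 * k"
  shows "inverse (cf_tail c k j) $ n = H j $ n"
  using n
proof (induction k arbitrary: j n)
  case 0 then show ?case by simp
next
  case (Suc k)
  have Hj: "H j = inverse (1 - fps_const (c j) * fps_X^2 * H (Suc j))"
    using fps_inverse_unique[OF H[of j, unfolded mult.commute[of "H j"]]] by simp
  have "\<forall>i<2 * Suc k. (1 - fps_const (c j) * fps_X^2 * inverse (cf_tail c k (Suc j))) $ i
      = (1 - fps_const (c j) * fps_X^2 * H (Suc j)) $ i"
    using Suc.IH by (auto simp: mult.assoc fps_X_power_mult_nth)
  from inverse_fps_nth_eq[OF this _ Suc.prems] show ?case
    unfolding Hj cf_tail.simps by simp
qed

lemma tendsto_cf_conv:
  fixes H :: "nat \<Rightarrow> 'a::field fps"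
  assumes H: "\<And>j. H j * (1 - fps_const (c j) * fps_X^2 * H (Suc j)) = 1"
  shows "(\<lambda>k. cf_conv c k) \<longlonglongrightarrow> H 0"
    and "(\<lambda>k. fps_X * cf_conv c k) \<longlonglongrightarrow> fps_X * H 0"
proof -
  have conv: "cf_conv c k $ n = H 0 $ n" if "Suc n \<le> k" for k n
    using inverse_cf_tail_nth[of H c, OF H, of n k 0] that by (simp add: cf_conv_def)
  show "(\<lambda>k. cf_conv c k) \<longlonglongrightarrow> H 0"
    by (rule tendsto_fpsI) (use conv in \<open>auto intro: eventually_sequentiallyI[of "Suc _"]\<close>)
  show "(\<lambda>k. fps_X * cf_conv c k) \<longlonglongrightarrow> fps_X * H 0"
  proof (rule tendsto_fpsI)
    fix n show "eventually (\<lambda>k. (fps_X * cf_conv c k) $ n = (fps_X * H 0) $ n) sequentially"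
      using conv by (intro eventually_sequentiallyI[of "Suc n"]) auto
  qed
qed

section \<open>Weighted lattice paths\<close>

text \<open>\<open>path_weight u d x k\<close> is the total weight of the paths of length \<open>x\<close> from height 1 to
  height \<open>k\<close> that stay nonnegative, where a step up from height \<open>h\<close> weighs \<open>u h\<close> and a step
  down from height \<open>h\<close> weighs \<open>d h\<close>.\<close>

fun path_weight :: "(nat \<Rightarrow> 'a::comm_semiring_1) \<Rightarrow> (nat \<Rightarrow> 'a) \<Rightarrow> nat \<Rightarrow> nat \<Rightarrow> 'a" where
  "path_weight u d 0 k = (if k = 1 then 1 else 0)"
| "path_weight u d (Suc x) k =
     (if k = 0 then 0 else u (k - 1) * path_weight u d x (k - 1)) + d (Suc k) * path_weight u d x (Suc k)"

lemma path_weight_parity: "even (x + k) \<Longrightarrow> path_weight u d x k = 0"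
  by (induction x arbitrary: k) auto

text \<open>The generating function of the paths ending at height \<open>k\<close>: such a path splits at its last
  up steps from the heights \<open>1, \<dots>, k - 1\<close>, and the paths from height \<open>h\<close> back to \<open>h\<close> that never go
  below \<open>h\<close> have generating function \<open>cf_fps c h\<close> with \<open>c j = u j * d (Suc j)\<close>. Paths visiting
  height 0 never come back once \<open>u 0 = 0\<close>.\<close>

definition path_gf :: "(nat \<Rightarrow> 'a::field) \<Rightarrow> (nat \<Rightarrow> 'a) \<Rightarrow> nat \<Rightarrow> 'a fps" where
  "path_gf u d k = (if k = 0 then fps_X * fps_const (d 1) * cf_fps (\<lambda>j. u j * d (Suc j)) 1
     else cf_fps (\<lambda>j. u j * d (Suc j)) 1
       * (\<Prod>i\<in>{1..<k}. fps_X * fps_const (u i) * cf_fps (\<lambda>j. u j * d (Suc j)) (Suc i)))"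

lemma path_gf_eq:
  fixes u d :: "nat \<Rightarrow> 'a::field"
  assumes u0: "u 0 = 0"
  shows "path_gf u d k = (if k = 1 then 1 else 0) + fps_X *
    ((if k = 0 then 0 else fps_const (u (k - 1)) * path_gf u d (k - 1))
      + fps_const (d (Suc k)) * path_gf u d (Suc k))"
proof -
  define c where "c = (\<lambda>j. u j * d (Suc j))"
  have F_Suc: "path_gf u d (Suc m) = path_gf u d m * (fps_X * fps_const (u m) * cf_fps c (Suc m))"
    if "m \<ge> 1" for m
    using that by (simp add: path_gf_def c_def prod.atLeastLessThan_Suc mult.assoc)
  consider "k = 0" | "k = 1" | m where "k = Suc m" "m \<ge> 1" by (cases k) (auto simp: Suc_le_eq)
  then show ?thesis
  proof cases
    case 1 then show ?thesis by (simp add: path_gf_def mult.assoc)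
  next
    case 2
    have "path_gf u d 1 = cf_fps c 1" by (simp add: path_gf_def c_def)
    also have "\<dots> = 1 + fps_const (c 1) * (fps_X^2 * (cf_fps c 2 * cf_fps c 1))"
      using cf_fps_eq[of c 1] by (simp add: numeral_2_eq_2)
    finally show ?thesis
      using 2 by (simp add: path_gf_def c_def u0 power2_eq_square numeral_2_eq_2 algebra_simps
          flip: fps_const_mult)
  next
    case 3
    note F1 = F_Suc[OF \<open>m \<ge> 1\<close>] and F2 = F_Suc[of "Suc m"]
    have "fps_X * (fps_const (u m) * path_gf u d m + fps_const (d (Suc (Suc m))) * path_gf u d (Suc (Suc m)))
        = path_gf u d m * (fps_X * fps_const (u m) *
           (1 + fps_const (c (Suc m)) * (fps_X^2 * (cf_fps c (Suc (Suc m)) * cf_fps c (Suc m)))))"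
      using F1 F2 by (simp add: c_def power2_eq_square algebra_simps)
    also have "\<dots> = path_gf u d (Suc m)"
      by (simp only: F1 cf_fps_eq[of c "Suc m", symmetric])
    finally show ?thesis using 3 by simp
  qed
qed

lemma path_gf_nth:
  fixes u d :: "nat \<Rightarrow> 'a::field"
  assumes "u 0 = 0"
  shows "path_gf u d k $ x = path_weight u d x k"
proof (induction x arbitrary: k)
  case 0 show ?case by (subst path_gf_eq[of u d, OF assms]) simp
next
  case (Suc x)
  show ?case by (subst path_gf_eq[of u d, OF assms]) (simp add: Suc.IH)
qed

section \<open>Counting vincular patterns letter by letter\<close>

text \<open>A pattern \<open>f a c b\<close> is read with \<open>a c\<close> an adjacent pair and \<open>b\<close> a later letter.\<close>

definition adj_count :: "('a \<Rightarrow> 'a \<Rightarrow> 'a \<Rightarrow> bool) \<Rightarrow> 'a list \<Rightarrow> 'a \<Rightarrow> nat" where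
  "adj_count f xs b = length (filter (\<lambda>(a, c). f a c b) (zip xs (tl xs)))"

definition occurrences :: "('a \<Rightarrow> 'a \<Rightarrow> 'a \<Rightarrow> bool) \<Rightarrow> 'a list \<Rightarrow> nat" where
  "occurrences f w = card {(i, j). Suc i < j \<and> j < length w \<and> f (w ! i) (w ! Suc i) (w ! j)}"

lemma adj_count_Nil [simp]: "adj_count f [] b = 0"
  and adj_count_singleton [simp]: "adj_count f [a] b = 0"
  by (simp_all add: adj_count_def)

lemma adj_count_Cons_Cons [simp]:
  "adj_count f (a # c # r) b = (if f a c b then 1 else 0) + adj_count f (c # r) b"
  by (simp add: adj_count_def)

lemma adj_count_Cons:
  "adj_count f (a # r) b = (if r \<noteq> [] \<and> f a (hd r) b then 1 else 0) + adj_count f r b"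
  by (cases r) auto

lemma adj_count_append_Cons:
  "adj_count f (L @ y # R) b = adj_count f L b + (if L \<noteq> [] \<and> f (last L) y b then 1 else 0)
     + (if R \<noteq> [] \<and> f y (hd R) b then 1 else 0) + adj_count f R b"
proof (induction L)
  case Nil then show ?case by (simp add: adj_count_Cons)
next
  case (Cons a L) then show ?case by (cases L) (auto simp: adj_count_Cons)
qed

lemma adj_count_snoc:
  "adj_count f (xs @ [y]) b = adj_count f xs b + (if xs \<noteq> [] \<and> f (last xs) y b then 1 else 0)"
  using adj_count_append_Cons[of f xs y "[]" b] by simp

lemma adj_count_eq_0: "(\<And>a c. \<not> f a c b) \<Longrightarrow> adj_count f xs b = 0"
  by (simp add: adj_count_def filter_False split_beta)

lemma occurrences_Nil [simp]: "occurrences f [] = 0"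
  by (simp add: occurrences_def)

lemma occurrences_snoc: "occurrences f (w @ [b]) = occurrences f w + adj_count f w b"
proof -
  let ?A = "{(i, j). Suc i < j \<and> j < length w \<and> f (w ! i) (w ! Suc i) (w ! j)}"
  let ?I = "{i. Suc i < length w \<and> f (w ! i) (w ! Suc i) b}"
  let ?B = "(\<lambda>i. (i, length w)) ` ?I"
  have eq: "{(i, j). Suc i < j \<and> j < length (w @ [b])
      \<and> f ((w @ [b]) ! i) ((w @ [b]) ! Suc i) ((w @ [b]) ! j)} = ?A \<union> ?B"
    by (auto simp: nth_append less_Suc_eq)
  have fA: "finite ?A" by (rule finite_subset[of _ "{..<length w} \<times> {..<length w}"]) auto
  have fB: "finite ?B" by (rule finite_imageI, rule finite_subset[of _ "{..<length w}"]) auto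
  have "card ?B = card ?I" by (rule card_image) (auto simp: inj_on_def)
  also have "\<dots> = adj_count f w b"
    unfolding adj_count_def length_filter_conv_card
    by (intro arg_cong[where f = card]) (auto simp: nth_tl)
  finally have "card ?B = adj_count f w b" .
  moreover have "card (?A \<union> ?B) = card ?A + card ?B"
    by (rule card_Un_disjoint[OF fA fB]) auto
  ultimately show ?thesis unfolding occurrences_def eq by simp
qed

lemma occurrences_singleton [simp]: "occurrences f [a] = 0"
  using occurrences_snoc[of f "[]" a] by simp

lemma occurrences_Cons:
  assumes "\<And>c b. \<not> f a c b"
  shows "occurrences f (a # w) = occurrences f w"
proof (induction w rule: rev_induct)
  case Nil then show ?case by simp
next
  case (snoc b w)
  then show ?case
    using occurrences_snoc[of f "a # w" b] occurrences_snoc[of f w b] assms by (simp add: adj_count_Cons)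
qed

lemma occurrences_rev:
  "occurrences f (rev w) = card {(i, j). Suc j < i \<and> i < length w \<and> f (w ! i) (w ! (i - 1)) (w ! j)}"
proof -
  let ?n = "length w"
  let ?C = "{(a, b). Suc a < b \<and> b < length (rev w) \<and> f (rev w ! a) (rev w ! Suc a) (rev w ! b)}"
  let ?D = "{(i, j). Suc j < i \<and> i < ?n \<and> f (w ! i) (w ! (i - 1)) (w ! j)}"
  let ?g = "\<lambda>(a, b). (?n - 1 - a, ?n - 1 - b)"
  have inj: "inj_on ?g ?C" by (rule inj_onI) auto
  have img: "?g ` ?C = ?D"
  proof
    show "?g ` ?C \<subseteq> ?D"
    proof clarify
      fix a b assume ab: "Suc a < b" "b < length (rev w)" "f (rev w ! a) (rev w ! Suc a) (rev w ! b)"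
      have "rev w ! a = w ! (?n - 1 - a)" "rev w ! Suc a = w ! (?n - 1 - a - 1)"
        "rev w ! b = w ! (?n - 1 - b)"
        using ab by (auto simp: rev_nth)
      then show "Suc (?n - 1 - b) < ?n - 1 - a \<and> ?n - 1 - a < ?n
          \<and> f (w ! (?n - 1 - a)) (w ! (?n - 1 - a - 1)) (w ! (?n - 1 - b))"
        using ab by auto
    qed
    show "?D \<subseteq> ?g ` ?C"
    proof clarify
      fix i j assume ij: "Suc j < i" "i < ?n" "f (w ! i) (w ! (i - 1)) (w ! j)"
      have "rev w ! (?n - 1 - i) = w ! i" "rev w ! Suc (?n - 1 - i) = w ! (i - 1)"
        "rev w ! (?n - 1 - j) = w ! j"
        using ij by (auto simp: rev_nth Suc_diff_Suc)
      then have "(?n - 1 - i, ?n - 1 - j) \<in> ?C" using ij by auto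
      moreover have "(i, j) = ?g (?n - 1 - i, ?n - 1 - j)" using ij by auto
      ultimately show "(i, j) \<in> ?g ` ?C" by blast
    qed
  qed
  show ?thesis unfolding occurrences_def using card_image[OF inj] img by simp
qed

lemma occurrences_replace_slot:
  assumes same: "\<And>a b. b < enat x \<Longrightarrow> f a (enat x) b = f a \<infinity> b \<and> f (enat x) a b = f \<infinity> a b"
    and never: "\<And>a c. \<not> f a c \<infinity>"
    and R: "\<forall>b\<in>set R. b < enat x \<or> b = \<infinity>"
  shows "occurrences f (L @ enat x # R) = occurrences f (L @ \<infinity> # R) + adj_count f L (enat x)"
  using R
proof (induction R rule: rev_induct)
  case Nil
  then show ?case using occurrences_snoc[of f L] adj_count_eq_0[of f \<infinity> L, OF never] by simp
next
  case (snoc b R)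
  have "adj_count f (L @ enat x # R) b = adj_count f (L @ \<infinity> # R) b"
  proof (cases "b = \<infinity>")
    case True then show ?thesis by (simp add: adj_count_eq_0 never)
  next
    case False
    then have "b < enat x" using snoc.prems by auto
    then show ?thesis using same by (simp add: adj_count_append_Cons)
  qed
  then show ?case using snoc by (simp add: occurrences_snoc[of f "L @ _ # R", simplified])
qed

lemma occurrences_expand_slot:
  assumes none: "\<And>b. b < enat x \<Longrightarrow> \<not> f \<infinity> (enat x) b \<and> \<not> f (enat x) \<infinity> b"
    and never: "\<And>a c. \<not> f a c \<infinity>"
    and R: "\<forall>b\<in>set R. b < enat x \<or> b = \<infinity>"
  shows "occurrences f (L @ \<infinity> # enat x # \<infinity> # R)
    = occurrences f (L @ \<infinity> # R) + adj_count f (L @ [\<infinity>]) (enat x)"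
  using R
proof (induction R rule: rev_induct)
  case Nil
  have "occurrences f (L @ [\<infinity>, enat x, \<infinity>]) = occurrences f (((L @ [\<infinity>]) @ [enat x]) @ [\<infinity>])"
    by simp
  also have "\<dots> = occurrences f (L @ [\<infinity>]) + adj_count f (L @ [\<infinity>]) (enat x)"
    by (simp only: occurrences_snoc adj_count_eq_0[of f \<infinity>, OF never])
  finally show ?case by simp
next
  case (snoc b R)
  have "adj_count f (L @ \<infinity> # enat x # \<infinity> # R) b = adj_count f (L @ \<infinity> # R) b"
  proof (cases "b = \<infinity>")
    case True then show ?thesis by (simp add: adj_count_eq_0 never)
  next
    case False
    then have "b < enat x" using snoc.prems by auto
    then show ?thesis using none[of b] by (simp add: adj_count_append_Cons adj_count_Cons)
  qed
  then show ?case
    using snoc occurrences_snoc[of f "L @ \<infinity> # enat x # \<infinity> # R" b]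
    by (simp add: occurrences_snoc[of f "L @ _ # R", simplified])
qed

definition is_31_2 :: "'a::ord \<Rightarrow> 'a \<Rightarrow> 'a \<Rightarrow> bool" where
  "is_31_2 a c b \<longleftrightarrow> c < b \<and> b < a"

definition is_13_2 :: "'a::ord \<Rightarrow> 'a \<Rightarrow> 'a \<Rightarrow> bool" where
  "is_13_2 a c b \<longleftrightarrow> a < b \<and> b < c"

lemma is_31_2_replace_slot:
  "b < enat x \<Longrightarrow> is_31_2 a (enat x) b = is_31_2 a \<infinity> b \<and> is_31_2 (enat x) a b = is_31_2 \<infinity> a b"
  by (cases b) (auto simp: is_31_2_def)

lemma is_13_2_replace_slot:
  "b < enat x \<Longrightarrow> is_13_2 a (enat x) b = is_13_2 a \<infinity> b \<and> is_13_2 (enat x) a b = is_13_2 \<infinity> a b"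
  by (cases b) (auto simp: is_13_2_def)

lemma not_is_31_2_infinity: "\<not> is_31_2 a c (\<infinity>::enat)"
  and not_is_13_2_infinity: "\<not> is_13_2 a c (\<infinity>::enat)"
  by (auto simp: is_31_2_def is_13_2_def)

lemma not_is_31_2_expand_slot: "b < enat x \<Longrightarrow> \<not> is_31_2 \<infinity> (enat x) b \<and> \<not> is_31_2 (enat x) \<infinity> b"
  by (auto simp: is_31_2_def)

lemma not_is_13_2_expand_slot: "b < enat x \<Longrightarrow> \<not> is_13_2 \<infinity> (enat x) b \<and> \<not> is_13_2 (enat x) \<infinity> b"
  by (auto simp: is_13_2_def)

fun alternating :: "bool \<Rightarrow> enat list \<Rightarrow> bool" where
  "alternating d [] = True"
| "alternating d [a] = True"
| "alternating d (a # c # r) = ((if d then c < a else a < c) \<and> alternating (\<not> d) (c # r))"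

lemma alternating_iff_nth:
  "alternating d w \<longleftrightarrow>
     (\<forall>i. Suc i < length w \<longrightarrow> (if d = even i then w ! Suc i < w ! i else w ! i < w ! Suc i))"
proof (induction w arbitrary: d rule: induct_list012)
  case (3 x y zs)
  have split_first: "(\<forall>i::nat. Q i) \<longleftrightarrow> Q 0 \<and> (\<forall>i. Q (Suc i))" for Q
    by (metis nat.exhaust)
  show ?case
    by (subst split_first) (use "3.IH"(2)[of "\<not> d"] in auto)
qed auto

lemma alternating_append_Cons:
  "alternating d (xs @ y # ys) \<longleftrightarrow>
     alternating d (xs @ [y]) \<and> alternating (if even (length xs) then d else \<not> d) (y # ys)"
proof (induction xs arbitrary: d)
  case Nil then show ?case by simp
next
  case (Cons a xs) then show ?case by (cases xs) auto
qed

lemma alternating_tl: "alternating d (a # w) \<Longrightarrow> alternating (\<not> d) w"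
  by (cases w) auto

lemma alternating_snoc:
  "alternating d (xs @ [y]) \<longleftrightarrow>
     alternating d xs \<and> (xs \<noteq> [] \<longrightarrow> (if d = even (length xs - 1) then y < last xs else last xs < y))"
proof (cases xs rule: rev_cases)
  case Nil then show ?thesis by simp
next
  case (snoc xs0 l)
  then show ?thesis using alternating_append_Cons[of d xs0 l "[y]"] by auto
qed

lemma alternating_rev:
  "alternating d (rev w) \<longleftrightarrow> alternating (if even (length w) then \<not> d else d) w"
proof (induction w arbitrary: d)
  case Nil then show ?case by simp
next
  case (Cons a w)
  have "alternating d (rev (a # w)) \<longleftrightarrow>
      alternating d (rev w) \<and> (w \<noteq> [] \<longrightarrow> (if d = even (length w - 1) then a < hd w else hd w < a))"
    by (simp add: alternating_snoc last_rev)
  also have "\<dots> \<longleftrightarrow> alternating (if even (length (a # w)) then \<not> d else d) (a # w)"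
    using Cons.IH by (cases w) auto
  finally show ?case .
qed

lemma alternating_infinity_even:
  assumes "alternating True w" "i < length w" "w ! i = \<infinity>"
  shows "even i"
proof (rule ccontr)
  assume "odd i"
  then obtain j where "i = Suc j" "even j" by (cases i) auto
  with assms show False unfolding alternating_iff_nth by (metis enat_ord_simps(6))
qed

lemma alternating_split_infinity:
  assumes "alternating True (L @ \<infinity> # R)"
  shows "even (length L)" "alternating True (L @ [\<infinity>])" "alternating True (\<infinity> # R)"
proof -
  show "even (length L)"
    using alternating_infinity_even[OF assms, of "length L"] by (simp add: nth_append)
  then show "alternating True (L @ [\<infinity>])" "alternating True (\<infinity> # R)"
    using assms alternating_append_Cons[of True L \<infinity> R] by simp_all
qed

lemma not_alternating_infinity_infinity: "\<not> alternating d (L @ \<infinity> # \<infinity> # R)"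
proof
  assume "alternating d (L @ \<infinity> # \<infinity> # R)"
  then have "alternating (if even (length L) then d else \<not> d) (\<infinity> # \<infinity> # R)"
    using alternating_append_Cons by blast
  then show False by (auto split: if_splits)
qed

text \<open>In an alternating word before a slot, every larger letter forms a 31-2 with exactly the
  descents starting at a slot, and a 13-2 with the ascents ending at a slot after the first
  letter.\<close>

lemma adj_count_is_31_2_alternating:
  "alternating True (L @ [\<infinity>]) \<Longrightarrow> \<forall>a\<in>set L. a < enat x \<or> a = \<infinity> \<Longrightarrow>
     adj_count is_31_2 L (enat x) = count_list L \<infinity>"
proof (induction L rule: induct_list012)
  case (3 a c r)
  have ca: "c < a" and "alternating False (c # r @ [\<infinity>])" using "3.prems"(1) by auto
  then have r: "alternating True (r @ [\<infinity>])" using alternating_tl by fastforce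
  have cx: "c < enat x" using ca "3.prems"(2) by (cases c) auto
  then have cinf: "c \<noteq> \<infinity>" by (cases c) auto
  have "adj_count is_31_2 r (enat x) = count_list r \<infinity>" using "3.IH"(1)[OF r] "3.prems"(2) by auto
  moreover have "is_31_2 a c (enat x) \<longleftrightarrow> a = \<infinity>"
    using cx "3.prems"(2) by (cases a) (auto simp: is_31_2_def)
  moreover have "\<not> is_31_2 c d (enat x)" for d using cx by (auto simp: is_31_2_def)
  ultimately show ?case using cinf by (simp add: adj_count_Cons)
qed auto

lemma adj_count_is_13_2_alternating:
  "alternating True (M @ [\<infinity>]) \<Longrightarrow> \<forall>a\<in>set M. a < enat x \<or> a = \<infinity> \<Longrightarrow>
     adj_count is_13_2 M (enat x) = count_list (tl M) \<infinity>"
proof (induction M rule: induct_list012)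
  case (3 a c r)
  have ca: "c < a" and "alternating False (c # r @ [\<infinity>])" using "3.prems"(1) by auto
  then have r: "alternating True (r @ [\<infinity>])" using alternating_tl by fastforce
  have cx: "c < enat x" using ca "3.prems"(2) by (cases c) auto
  then have cinf: "c \<noteq> \<infinity>" by (cases c) auto
  have "adj_count is_13_2 r (enat x) = count_list (tl r) \<infinity>" using "3.IH"(1)[OF r] "3.prems"(2) by auto
  moreover have "\<not> is_13_2 a c (enat x)" using cx by (auto simp: is_13_2_def)
  moreover have "r \<noteq> [] \<Longrightarrow> is_13_2 c (hd r) (enat x) \<longleftrightarrow> hd r = \<infinity>"
    using cx "3.prems"(2) hd_in_set[of r] by (cases "hd r") (auto simp: is_13_2_def)
  ultimately show ?case using cinf by (cases r) (auto simp: adj_count_Cons)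
qed auto

lemma occurrences_is_31_2_insert:
  assumes alt: "alternating True (L @ [\<infinity>])"
    and L: "\<forall>b\<in>set L. b < enat x \<or> b = \<infinity>" and R: "\<forall>b\<in>set R. b < enat x \<or> b = \<infinity>"
  shows "occurrences is_31_2 (L @ enat x # R) = occurrences is_31_2 (L @ \<infinity> # R) + count_list L \<infinity>"
    and "occurrences is_31_2 (L @ \<infinity> # enat x # \<infinity> # R)
      = occurrences is_31_2 (L @ \<infinity> # R) + count_list L \<infinity>"
proof -
  have cnt: "adj_count is_31_2 L (enat x) = count_list L \<infinity>"
    by (rule adj_count_is_31_2_alternating[OF alt L])
  show "occurrences is_31_2 (L @ enat x # R) = occurrences is_31_2 (L @ \<infinity> # R) + count_list L \<infinity>"
    using occurrences_replace_slot[where f = is_31_2, OF is_31_2_replace_slot not_is_31_2_infinity R] cnt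
    by simp
  show "occurrences is_31_2 (L @ \<infinity> # enat x # \<infinity> # R)
      = occurrences is_31_2 (L @ \<infinity> # R) + count_list L \<infinity>"
    using occurrences_expand_slot[where f = is_31_2, OF not_is_31_2_expand_slot not_is_31_2_infinity R] cnt
    by (simp add: adj_count_snoc is_31_2_def)
qed

lemma occurrences_is_13_2_insert:
  assumes alt: "alternating True (L @ [\<infinity>])"
    and L: "\<forall>b\<in>set L. b < enat x \<or> b = \<infinity>" and R: "\<forall>b\<in>set R. b < enat x \<or> b = \<infinity>"
  shows "occurrences is_13_2 (L @ enat x # R)
      = occurrences is_13_2 (L @ \<infinity> # R) + count_list (tl L) \<infinity>"
    and "occurrences is_13_2 (L @ \<infinity> # enat x # \<infinity> # R)
      = occurrences is_13_2 (L @ \<infinity> # R) + count_list (tl L) \<infinity> + (if L = [] then 0 else 1)"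
proof -
  have cnt: "adj_count is_13_2 L (enat x) = count_list (tl L) \<infinity>"
    by (rule adj_count_is_13_2_alternating[OF alt L])
  show "occurrences is_13_2 (L @ enat x # R)
      = occurrences is_13_2 (L @ \<infinity> # R) + count_list (tl L) \<infinity>"
    using occurrences_replace_slot[where f = is_13_2, OF is_13_2_replace_slot not_is_13_2_infinity R] cnt
    by simp
  have "last L < enat x" if "L \<noteq> []"
  proof -
    have "last L < \<infinity>" using alt that by (auto simp: alternating_snoc split: if_splits)
    then show ?thesis using L that by (metis last_in_set order.strict_iff_not)
  qed
  then have "adj_count is_13_2 (L @ [\<infinity>]) (enat x) = count_list (tl L) \<infinity> + (if L = [] then 0 else 1)"
    using cnt by (simp add: adj_count_snoc is_13_2_def)
  then show "occurrences is_13_2 (L @ \<infinity> # enat x # \<infinity> # R)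
      = occurrences is_13_2 (L @ \<infinity> # R) + count_list (tl L) \<infinity> + (if L = [] then 0 else 1)"
    using occurrences_expand_slot[where f = is_13_2, OF not_is_13_2_expand_slot not_is_13_2_infinity R]
    by simp
qed

section \<open>Words with slots\<close>

fun split_slot :: "enat list \<Rightarrow> nat \<Rightarrow> enat list \<times> enat list" where
  "split_slot [] s = ([], [])"
| "split_slot (a # w) s = (if a = \<infinity> \<and> s = 0 then ([], w)
      else (case split_slot w (if a = \<infinity> then s - 1 else s) of (L, R) \<Rightarrow> (a # L, R)))"

lemma split_slot_eq:
  "s < count_list w \<infinity> \<Longrightarrow> split_slot w s = (L, R) \<Longrightarrow> w = L @ \<infinity> # R \<and> count_list L \<infinity> = s"
proof (induction w arbitrary: s L R)
  case Nil then show ?case by simp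
next
  case (Cons a w)
  show ?case
  proof (cases "a = \<infinity> \<and> s = 0")
    case True then show ?thesis using Cons.prems by auto
  next
    case False
    obtain L' R' where sp: "split_slot w (if a = \<infinity> then s - 1 else s) = (L', R')" by fastforce
    have "(if a = \<infinity> then s - 1 else s) < count_list w \<infinity>" using Cons.prems(1) False by auto
    from Cons.IH[OF this sp]
    have "w = L' @ \<infinity> # R'" "count_list L' \<infinity> = (if a = \<infinity> then s - 1 else s)" by auto
    moreover have "L = a # L'" "R = R'" using Cons.prems(2) False sp by auto
    ultimately show ?thesis using False by auto
  qed
qed

lemma split_slot_append: "split_slot (L @ \<infinity> # R) (count_list L \<infinity>) = (L, R)"
  by (induction L) auto

definition finite_part :: "enat list \<Rightarrow> enat list" where
  "finite_part w = filter (\<lambda>a. a \<noteq> \<infinity>) w"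

lemma finite_part_simps [simp]:
  "finite_part [] = []"
  "finite_part (a # w) = (if a = \<infinity> then finite_part w else a # finite_part w)"
  "finite_part (xs @ ys) = finite_part xs @ finite_part ys"
  by (auto simp: finite_part_def)

lemma set_finite_part: "set (finite_part w) = set w - {\<infinity>}"
  by (auto simp: finite_part_def)

lemma length_finite_part: "length w = length (finite_part w) + count_list w \<infinity>"
  by (induction w) auto

text \<open>The partial alternating permutations with letters \<open>1, \<dots>, x\<close> and \<open>k\<close> slots \<open>\<infinity>\<close>, the slots
  playing the role of letters larger than all others. For odd lengths (\<open>\<not> e\<close>) every slot is
  eventually filled; for even lengths (\<open>e\<close>) the word ends with \<open>\<infinity>\<close>, which stands for the end of
  the permutation and is never filled by a peak.\<close>

definition slotted_words :: "bool \<Rightarrow> nat \<Rightarrow> nat \<Rightarrow> enat list set" where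
  "slotted_words e x k = {w. alternating True w \<and> odd (length w) \<and> distinct (finite_part w)
      \<and> set (finite_part w) = enat ` {1..x} \<and> count_list w \<infinity> = k \<and> (e \<longrightarrow> last w = \<infinity>)}"

definition peak_slots :: "bool \<Rightarrow> nat \<Rightarrow> nat" where
  "peak_slots e k = (if e then k - 1 else k)"

text \<open>Reversing turns 2-13 and 2-31 into 31-2 and 13-2.\<close>

definition slot_weight :: "bool \<Rightarrow> 'a::comm_ring_1 \<Rightarrow> 'a \<Rightarrow> enat list \<Rightarrow> 'a" where
  "slot_weight e p q w =
     q ^ occurrences is_31_2 w * p ^ occurrences (if e then is_13_2 else is_31_2) (rev w)"

definition slot_sum :: "bool \<Rightarrow> 'a::comm_ring_1 \<Rightarrow> 'a \<Rightarrow> nat \<Rightarrow> nat \<Rightarrow> 'a" where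
  "slot_sum e p q x k = (\<Sum>w\<in>slotted_words e x k. slot_weight e p q w)"

definition insert_peak :: "nat \<Rightarrow> enat list \<Rightarrow> nat \<Rightarrow> enat list" where
  "insert_peak x w s = (case split_slot w s of (L, R) \<Rightarrow> L @ enat x # R)"

definition insert_valley :: "nat \<Rightarrow> enat list \<Rightarrow> nat \<Rightarrow> enat list" where
  "insert_valley x w s = (case split_slot w s of (L, R) \<Rightarrow> L @ \<infinity> # enat x # \<infinity> # R)"

lemma finite_slotted_words: "finite (slotted_words e x k)"
proof (rule finite_subset)
  show "slotted_words e x k \<subseteq> {w. set w \<subseteq> insert \<infinity> (enat ` {1..x}) \<and> length w \<le> x + k}"
  proof
    fix w assume w: "w \<in> slotted_words e x k"
    have "card (enat ` {1..x}) = x" by (simp add: card_image inj_on_def)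
    then have "length (finite_part w) = x"
      using w distinct_card[of "finite_part w"] by (auto simp: slotted_words_def)
    then show "w \<in> {w. set w \<subseteq> insert \<infinity> (enat ` {1..x}) \<and> length w \<le> x + k}"
      using w length_finite_part[of w] by (auto simp: slotted_words_def set_finite_part)
  qed
  show "finite {w. set w \<subseteq> insert \<infinity> (enat ` {1..x}) \<and> length w \<le> x + k}"
    by (rule finite_lists_length_le) auto
qed

lemma slotted_words_0: "slotted_words e 0 k = (if k = 1 then {[\<infinity>]} else {})"
proof -
  have "w \<in> slotted_words e 0 k \<longleftrightarrow> k = 1 \<and> w = [\<infinity>]" for w
  proof
    assume w: "w \<in> slotted_words e 0 k"
    then have all: "\<forall>a\<in>set w. a = \<infinity>" by (auto simp: slotted_words_def set_finite_part)
    have "w = [\<infinity>]"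
    proof (cases w rule: remdups_adj.cases)
      case 1 then show ?thesis using w by (simp add: slotted_words_def)
    next
      case (2 a) then show ?thesis using all by simp
    next
      case (3 a c r) then show ?thesis using all w by (simp add: slotted_words_def)
    qed
    then show "k = 1 \<and> w = [\<infinity>]" using w by (simp add: slotted_words_def)
  qed (simp add: slotted_words_def)
  then show ?thesis by auto
qed

lemma slotted_word_letter_less:
  assumes "w \<in> slotted_words e x k" "a \<in> set w"
  shows "a < enat (Suc x) \<or> a = \<infinity>"
proof -
  have "set w - {\<infinity>} = enat ` {1..x}"
    using assms(1) by (simp add: slotted_words_def set_finite_part)
  show ?thesis
  proof (cases "a = \<infinity>")
    case False
    with assms(2) \<open>set w - {\<infinity>} = enat ` {1..x}\<close> have "a \<in> enat ` {1..x}" by blast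
    then show ?thesis by auto
  qed simp
qed

lemma slotted_word_split:
  assumes w: "w \<in> slotted_words e x k" and s: "s < k"
  obtains L R where "split_slot w s = (L, R)" "w = L @ \<infinity> # R" "count_list L \<infinity> = s"
    "even (length L)" "alternating True (L @ [\<infinity>])" "alternating True (\<infinity> # R)"
    "alternating True (rev R @ [\<infinity>])"
    "\<forall>b\<in>set L. b < enat (Suc x) \<or> b = \<infinity>" "\<forall>b\<in>set R. b < enat (Suc x) \<or> b = \<infinity>"
proof -
  obtain L R where sp: "split_slot w s = (L, R)" by fastforce
  have "s < count_list w \<infinity>" using w s by (simp add: slotted_words_def)
  from split_slot_eq[OF this sp] have wLR: "w = L @ \<infinity> # R" and cL: "count_list L \<infinity> = s" by auto
  have alt: "alternating True w" and od: "odd (length w)" using w by (auto simp: slotted_words_def)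
  have "alternating True (rev w)" using alt od by (simp add: alternating_rev)
  then have "alternating True (rev R @ \<infinity> # rev L)" using wLR by simp
  from alternating_split_infinity(2)[OF this] alternating_split_infinity[OF alt[unfolded wLR]]
    slotted_word_letter_less[OF w] show thesis
    by (intro that[OF sp wLR cL]) (auto simp: wLR)
qed

lemma finite_part_add_letter:
  assumes w: "w \<in> slotted_words e x k" and wLR: "w = L @ \<infinity> # R"
  shows "distinct (finite_part (L @ enat (Suc x) # R))"
    and "set (finite_part (L @ enat (Suc x) # R)) = enat ` {1..Suc x}"
proof -
  have dis: "distinct (finite_part w)" and st: "set (finite_part w) = enat ` {1..x}"
    using w by (auto simp: slotted_words_def)
  then have "enat (Suc x) \<notin> set (finite_part L) \<union> set (finite_part R)" using wLR by auto
  then show "distinct (finite_part (L @ enat (Suc x) # R))" using dis wLR by auto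
  have "set (finite_part (L @ enat (Suc x) # R)) = insert (enat (Suc x)) (set (finite_part w))"
    using wLR by auto
  then show "set (finite_part (L @ enat (Suc x) # R)) = enat ` {1..Suc x}"
    using st by (auto simp: atLeastAtMostSuc_conv)
qed

lemma insert_peak_in_slotted_words:
  assumes w: "w \<in> slotted_words e x (Suc k)" and s: "s < peak_slots e (Suc k)"
  shows "insert_peak (Suc x) w s \<in> slotted_words e (Suc x) k"
proof -
  let ?X = "enat (Suc x)"
  have "s < Suc k" using s by (simp add: peak_slots_def split: if_splits)
  with w obtain L R where sp: "split_slot w s = (L, R)" and wLR: "w = L @ \<infinity> # R"
    and cL: "count_list L \<infinity> = s" and eL: "even (length L)"
    and aL: "alternating True (L @ [\<infinity>])" and aR: "alternating True (\<infinity> # R)"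
    and smL: "\<forall>b\<in>set L. b < ?X \<or> b = \<infinity>" and smR: "\<forall>b\<in>set R. b < ?X \<or> b = \<infinity>"
    by (rule slotted_word_split)
  have cw: "count_list w \<infinity> = Suc k" and ee: "e \<longrightarrow> last w = \<infinity>" and od: "odd (length w)"
    using w by (auto simp: slotted_words_def)
  have altL: "alternating True (L @ [?X])"
  proof -
    have "alternating True L" using aL alternating_snoc by blast
    moreover have "last L < ?X" if "L \<noteq> []"
    proof -
      have "last L < \<infinity>" using that aL eL by (auto simp: alternating_snoc)
      moreover have "last L \<in> set L" using that by simp
      ultimately show ?thesis using smL by fastforce
    qed
    ultimately show ?thesis using eL by (auto simp: alternating_snoc)
  qed
  have altR: "alternating True (?X # R)"
  proof (cases R)
    case (Cons c r)
    with aR smR show ?thesis by auto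
  qed simp
  have "R \<noteq> []" if e
    using that s cw cL wLR by (auto simp: peak_slots_def)
  then have "e \<longrightarrow> last (L @ ?X # R) = \<infinity>" using ee wLR by auto
  moreover have "insert_peak (Suc x) w s = L @ ?X # R" by (simp add: insert_peak_def sp)
  ultimately show ?thesis
    using finite_part_add_letter[OF w wLR] altL altR eL cw cL od wLR
      alternating_append_Cons[of True L ?X R]
    by (simp add: slotted_words_def)
qed

lemma slot_weight_insert_peak:
  assumes w: "w \<in> slotted_words e x (Suc k)" and s: "s < peak_slots e (Suc k)"
  shows "slot_weight e p q (insert_peak (Suc x) w s)
    = slot_weight e p q w * q ^ s * p ^ (peak_slots e (Suc k) - 1 - s)"
proof -
  let ?X = "enat (Suc x)"
  have "s < Suc k" using s by (simp add: peak_slots_def split: if_splits)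
  with w obtain L R where sp: "split_slot w s = (L, R)" and wLR: "w = L @ \<infinity> # R"
    and cL: "count_list L \<infinity> = s" and aL: "alternating True (L @ [\<infinity>])"
    and aRR: "alternating True (rev R @ [\<infinity>])"
    and smL: "\<forall>b\<in>set L. b < ?X \<or> b = \<infinity>" and smR: "\<forall>b\<in>set R. b < ?X \<or> b = \<infinity>"
    by (rule slotted_word_split)
  have cR: "count_list R \<infinity> = Suc k - 1 - s" using w cL wLR by (auto simp: slotted_words_def)
  have smR': "\<forall>b\<in>set (rev R). b < ?X \<or> b = \<infinity>" and smL': "\<forall>b\<in>set (rev L). b < ?X \<or> b = \<infinity>"
    using smL smR by auto
  have "occurrences (if e then is_13_2 else is_31_2) (rev R @ ?X # rev L)
    = occurrences (if e then is_13_2 else is_31_2) (rev w) + (peak_slots e (Suc k) - 1 - s)"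
  proof (cases e)
    case False
    then show ?thesis using occurrences_is_31_2_insert(1)[OF aRR smR' smL'] cR wLR
      by (simp add: peak_slots_def)
  next
    case True
    have "R \<noteq> []" using True s cR by (auto simp: peak_slots_def)
    moreover have "last R = \<infinity>" using w True wLR \<open>R \<noteq> []\<close> by (simp add: slotted_words_def)
    ultimately obtain R0 where "R = R0 @ [\<infinity>]" by (metis append_butlast_last_id)
    then show ?thesis using True occurrences_is_13_2_insert(1)[OF aRR smR' smL'] cR wLR
      by (simp add: peak_slots_def)
  qed
  then show ?thesis
    using occurrences_is_31_2_insert(1)[OF aL smL smR] cL wLR
    unfolding slot_weight_def insert_peak_def sp by (simp add: power_add mult_ac)
qed

lemma insert_valley_in_slotted_words:
  assumes w: "w \<in> slotted_words e x k" and s: "s < k"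
  shows "insert_valley (Suc x) w s \<in> slotted_words e (Suc x) (Suc k)"
proof -
  let ?X = "enat (Suc x)"
  from w s obtain L R where sp: "split_slot w s = (L, R)" and wLR: "w = L @ \<infinity> # R"
    and eL: "even (length L)" and aL: "alternating True (L @ [\<infinity>])"
    and aR: "alternating True (\<infinity> # R)"
    by (rule slotted_word_split)
  have "alternating True (L @ \<infinity> # ?X # \<infinity> # R)"
    using alternating_append_Cons[of True L \<infinity> "?X # \<infinity> # R"] eL aL aR by simp
  moreover have "insert_valley (Suc x) w s = L @ \<infinity> # ?X # \<infinity> # R"
    by (simp add: insert_valley_def sp)
  ultimately show ?thesis
    using w finite_part_add_letter[OF w wLR] wLR by (auto simp: slotted_words_def)
qed

lemma slot_weight_insert_valley:
  assumes w: "w \<in> slotted_words e x k" and s: "s < k"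
  shows "slot_weight e p q (insert_valley (Suc x) w s) = slot_weight e p q w * q ^ s * p ^ (k - 1 - s)"
proof -
  let ?X = "enat (Suc x)"
  from w s obtain L R where sp: "split_slot w s = (L, R)" and wLR: "w = L @ \<infinity> # R"
    and cL: "count_list L \<infinity> = s" and aL: "alternating True (L @ [\<infinity>])"
    and aRR: "alternating True (rev R @ [\<infinity>])"
    and smL: "\<forall>b\<in>set L. b < ?X \<or> b = \<infinity>" and smR: "\<forall>b\<in>set R. b < ?X \<or> b = \<infinity>"
    by (rule slotted_word_split)
  have cR: "count_list R \<infinity> = k - 1 - s" using w cL wLR by (auto simp: slotted_words_def)
  have smR': "\<forall>b\<in>set (rev R). b < ?X \<or> b = \<infinity>" and smL': "\<forall>b\<in>set (rev L). b < ?X \<or> b = \<infinity>"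
    using smL smR by auto
  have "occurrences (if e then is_13_2 else is_31_2) (rev R @ \<infinity> # ?X # \<infinity> # rev L)
      = occurrences (if e then is_13_2 else is_31_2) (rev w) + (k - 1 - s)"
  proof (cases e)
    case False
    then show ?thesis using occurrences_is_31_2_insert(2)[OF aRR smR' smL'] cR wLR by simp
  next
    case True
    show ?thesis
    proof (cases "R = []")
      case False
      have "last R = \<infinity>" using w True wLR False by (simp add: slotted_words_def)
      with False obtain R0 where "R = R0 @ [\<infinity>]" by (metis append_butlast_last_id)
      then show ?thesis using True occurrences_is_13_2_insert(2)[OF aRR smR' smL'] cR wLR by simp
    qed (use True occurrences_is_13_2_insert(2)[OF aRR smR' smL'] cR wLR in simp)
  qed
  then show ?thesis
    using occurrences_is_31_2_insert(2)[OF aL smL smR] cL wLR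
    unfolding slot_weight_def insert_valley_def sp by (simp add: power_add mult_ac)
qed

lemma slotted_word_remove_max:
  assumes w': "w' \<in> slotted_words e (Suc x) k" and AB: "w' = A @ enat (Suc x) # B"
  shows "distinct (finite_part (A @ B))" "set (finite_part (A @ B)) = enat ` {1..x}"
    "\<forall>b\<in>set A \<union> set B. b < enat (Suc x) \<or> b = \<infinity>"
proof -
  have dis: "distinct (finite_part w')" and st: "set (finite_part w') = enat ` {1..Suc x}"
    using w' by (auto simp: slotted_words_def)
  have X: "enat (Suc x) \<notin> set A \<union> set B" using dis AB by (auto simp: finite_part_def)
  show "distinct (finite_part (A @ B))" using dis AB by auto
  have "set (finite_part (A @ B)) = set (finite_part w') - {enat (Suc x)}"
    using AB X by (auto simp: set_finite_part)
  also have "\<dots> = enat ` {1..x}" using st by auto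
  finally show "set (finite_part (A @ B)) = enat ` {1..x}" .
  show "\<forall>b\<in>set A \<union> set B. b < enat (Suc x) \<or> b = \<infinity>"
  proof
    fix b assume b: "b \<in> set A \<union> set B"
    show "b < enat (Suc x) \<or> b = \<infinity>"
    proof (cases "b = \<infinity>")
      case False
      then have "b \<in> enat ` {1..Suc x}" using b st AB by (auto simp: set_finite_part)
      moreover have "b \<noteq> enat (Suc x)" using b X by auto
      ultimately show ?thesis by auto
    qed simp
  qed
qed

lemma remove_peak:
  assumes w': "w' \<in> slotted_words e (Suc x) k" and AB: "w' = A @ enat (Suc x) # B"
    and eA: "even (length A)"
  shows "A @ \<infinity> # B \<in> slotted_words e x (Suc k)" and "count_list A \<infinity> < peak_slots e (Suc k)"
proof -
  let ?X = "enat (Suc x)"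
  have alt: "alternating True w'" and od: "odd (length w')" and cw: "count_list w' \<infinity> = k"
    and ee: "e \<longrightarrow> last w' = \<infinity>"
    using w' by (auto simp: slotted_words_def)
  have a1: "alternating True (A @ [?X])" and a2: "alternating True (?X # B)"
    using alternating_append_Cons[of True A ?X B] alt AB eA by auto
  have "alternating True (A @ [\<infinity>])"
  proof -
    have "last A < \<infinity>" if "A \<noteq> []"
    proof -
      have "last A < ?X" using that a1 eA by (auto simp: alternating_snoc)
      then show ?thesis by (cases "last A") auto
    qed
    then show ?thesis using a1 eA by (auto simp: alternating_snoc)
  qed
  moreover have "alternating True (\<infinity> # B)"
  proof (cases B)
    case (Cons c r)
    with a2 have "c < ?X" "alternating False (c # r)" by auto
    then show ?thesis using Cons by (cases c) auto
  qed simp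
  ultimately have "alternating True (A @ \<infinity> # B)"
    using alternating_append_Cons[of True A \<infinity> B] eA by simp
  moreover have B: "B \<noteq> [] \<and> last B = \<infinity>" if e
    using that ee AB by (cases "B = []") auto
  moreover have "odd (length (A @ \<infinity> # B))" "count_list (A @ \<infinity> # B) \<infinity> = Suc k"
    using od cw AB by simp_all
  ultimately show "A @ \<infinity> # B \<in> slotted_words e x (Suc k)"
    using slotted_word_remove_max(1,2)[OF w' AB] by (simp add: slotted_words_def)
  show "count_list A \<infinity> < peak_slots e (Suc k)"
  proof (cases e)
    case True
    then have "\<infinity> \<in> set B" using B by (metis last_in_set)
    then have "count_list B \<infinity> \<noteq> 0" by (simp add: count_list_0_iff)
    then show ?thesis using True cw AB by (simp add: peak_slots_def)
  qed (use cw AB in \<open>simp add: peak_slots_def\<close>)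
qed

lemma remove_valley:
  assumes w': "w' \<in> slotted_words e (Suc x) k" and AB: "w' = A @ enat (Suc x) # B"
    and oA: "odd (length A)"
  obtains A0 B0 where "A = A0 @ [\<infinity>]" "B = \<infinity> # B0"
    "A0 @ \<infinity> # B0 \<in> slotted_words e x (k - 1)" "count_list A0 \<infinity> < k - 1"
proof -
  let ?X = "enat (Suc x)"
  have alt: "alternating True w'" and od: "odd (length w')" and cw: "count_list w' \<infinity> = k"
    and ee: "e \<longrightarrow> last w' = \<infinity>"
    using w' by (auto simp: slotted_words_def)
  note small = slotted_word_remove_max(3)[OF w' AB]
  obtain A0 a where A: "A = A0 @ [a]" using oA by (metis append_butlast_last_id even_zero list.size(3))
  obtain b B0 where B: "B = b # B0" using od AB oA by (cases B) auto
  have eA0: "even (length A0)" using oA A by simp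
  have alt_nth: "(if even i then w' ! Suc i < w' ! i else w' ! i < w' ! Suc i)"
    if "Suc i < length w'" for i
    using alt that unfolding alternating_iff_nth by simp
  have "Suc (Suc (length A0)) < length w'" using AB A B by simp
  then have "w' ! Suc (length A0) < w' ! length A0" "w' ! Suc (length A0) < w' ! Suc (Suc (length A0))"
    using alt_nth[of "length A0"] alt_nth[of "Suc (length A0)"] eA0 by simp_all
  then have "?X < a" "?X < b" using AB A B by (simp_all add: nth_append)
  moreover have "a \<in> set A" "b \<in> set B" using A B by simp_all
  ultimately have "a = \<infinity>" "b = \<infinity>" using small by (metis UnI1 UnI2 order.asym)+
  then have w'e: "w' = A0 @ \<infinity> # (?X # \<infinity> # B0)" using AB A B by simp
  then have "alternating True (A0 @ [\<infinity>])" "alternating True (\<infinity> # ?X # \<infinity> # B0)"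
    using alternating_append_Cons[of True A0 \<infinity> "?X # \<infinity> # B0"] alt eA0 by auto
  then have "alternating True (A0 @ \<infinity> # B0)"
    using alternating_append_Cons[of True A0 \<infinity> B0] eA0 by simp
  moreover have "distinct (finite_part (A0 @ \<infinity> # B0))" "set (finite_part (A0 @ \<infinity> # B0)) = enat ` {1..x}"
    using slotted_word_remove_max(1,2)[OF w' AB] \<open>a = \<infinity>\<close> \<open>b = \<infinity>\<close> A B by auto
  moreover have "odd (length (A0 @ \<infinity> # B0))" "count_list (A0 @ \<infinity> # B0) \<infinity> = k - 1"
    using od cw w'e by simp_all
  moreover have "e \<longrightarrow> last (A0 @ \<infinity> # B0) = \<infinity>" using ee w'e by (cases "B0 = []") auto
  ultimately have "A0 @ \<infinity> # B0 \<in> slotted_words e x (k - 1)"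
    by (simp add: slotted_words_def)
  moreover have "count_list A0 \<infinity> < k - 1" using cw w'e by simp
  ultimately show thesis using that A B \<open>a = \<infinity>\<close> \<open>b = \<infinity>\<close> by blast
qed

lemma slotted_words_Suc_cases:
  assumes w': "w' \<in> slotted_words e (Suc x) k"
  obtains (peak) w s where "w \<in> slotted_words e x (Suc k)" "s < peak_slots e (Suc k)"
      "w' = insert_peak (Suc x) w s"
  | (valley) w s where "w \<in> slotted_words e x (k - 1)" "s < k - 1"
      "w' = insert_valley (Suc x) w s"
proof -
  have "enat (Suc x) \<in> set w'" using w' by (auto simp: slotted_words_def set_finite_part)
  then obtain A B where AB: "w' = A @ enat (Suc x) # B" by (meson split_list)
  show thesis
  proof (cases "even (length A)")
    case True
    have "w' = insert_peak (Suc x) (A @ \<infinity> # B) (count_list A \<infinity>)"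
      by (simp add: AB insert_peak_def split_slot_append)
    with remove_peak[OF w' AB True] show thesis by (rule peak)
  next
    case False
    with w' AB obtain A0 B0 where "A = A0 @ [\<infinity>]" "B = \<infinity> # B0"
      "A0 @ \<infinity> # B0 \<in> slotted_words e x (k - 1)" "count_list A0 \<infinity> < k - 1"
      by (rule remove_valley)
    moreover have "w' = insert_valley (Suc x) (A0 @ \<infinity> # B0) (count_list A0 \<infinity>)"
      using AB \<open>A = A0 @ [\<infinity>]\<close> \<open>B = \<infinity> # B0\<close>
      by (simp add: insert_valley_def split_slot_append)
    ultimately show thesis by (intro valley) simp_all
  qed
qed

lemma inj_on_insert_peak:
  "inj_on (\<lambda>(w, s). insert_peak (Suc x) w s) (slotted_words e x k \<times> {..<k})"
proof (rule inj_onI, clarify)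
  fix w1 s1 w2 s2
  assume w: "w1 \<in> slotted_words e x k" "w2 \<in> slotted_words e x k" and s: "s1 < k" "s2 < k"
    and eq: "insert_peak (Suc x) w1 s1 = insert_peak (Suc x) w2 s2"
  obtain L1 R1 where "split_slot w1 s1 = (L1, R1)" "w1 = L1 @ \<infinity> # R1" "count_list L1 \<infinity> = s1"
    "\<forall>b\<in>set L1. b < enat (Suc x) \<or> b = \<infinity>" "\<forall>b\<in>set R1. b < enat (Suc x) \<or> b = \<infinity>"
    using slotted_word_split[OF w(1) s(1)] by metis
  moreover obtain L2 R2 where "split_slot w2 s2 = (L2, R2)" "w2 = L2 @ \<infinity> # R2" "count_list L2 \<infinity> = s2"
    using slotted_word_split[OF w(2) s(2)] by metis
  ultimately show "w1 = w2 \<and> s1 = s2"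
    using eq append_Cons_eq_iff[of "enat (Suc x)" L1 R1 L2 R2] by (fastforce simp: insert_peak_def)
qed

lemma inj_on_insert_valley:
  "inj_on (\<lambda>(w, s). insert_valley (Suc x) w s) (slotted_words e x k \<times> {..<k})"
proof (rule inj_onI, clarify)
  fix w1 s1 w2 s2
  assume w: "w1 \<in> slotted_words e x k" "w2 \<in> slotted_words e x k" and s: "s1 < k" "s2 < k"
    and eq: "insert_valley (Suc x) w1 s1 = insert_valley (Suc x) w2 s2"
  obtain L1 R1 where "split_slot w1 s1 = (L1, R1)" "w1 = L1 @ \<infinity> # R1" "count_list L1 \<infinity> = s1"
    "\<forall>b\<in>set L1. b < enat (Suc x) \<or> b = \<infinity>" "\<forall>b\<in>set R1. b < enat (Suc x) \<or> b = \<infinity>"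
    using slotted_word_split[OF w(1) s(1)] by metis
  moreover obtain L2 R2 where "split_slot w2 s2 = (L2, R2)" "w2 = L2 @ \<infinity> # R2" "count_list L2 \<infinity> = s2"
    using slotted_word_split[OF w(2) s(2)] by metis
  ultimately show "w1 = w2 \<and> s1 = s2"
    using eq append_Cons_eq_iff[of "enat (Suc x)" "L1 @ [\<infinity>]" "\<infinity> # R1" "L2 @ [\<infinity>]" "\<infinity> # R2"]
    by (fastforce simp: insert_valley_def)
qed

lemma insert_peak_neq_insert_valley:
  assumes "w1 \<in> slotted_words e x j1" "s1 < j1" "w2 \<in> slotted_words e x j2" "s2 < j2"
  shows "insert_peak (Suc x) w1 s1 \<noteq> insert_valley (Suc x) w2 s2"
proof
  assume eq: "insert_peak (Suc x) w1 s1 = insert_valley (Suc x) w2 s2"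
  obtain L1 R1 where sp1: "split_slot w1 s1 = (L1, R1)" and w1: "w1 = L1 @ \<infinity> # R1"
    and "\<forall>b\<in>set L1. b < enat (Suc x) \<or> b = \<infinity>" "\<forall>b\<in>set R1. b < enat (Suc x) \<or> b = \<infinity>"
    using slotted_word_split[OF assms(1,2)] by metis
  moreover obtain L2 R2 where "split_slot w2 s2 = (L2, R2)"
    using slotted_word_split[OF assms(3,4)] by metis
  ultimately have "L1 = L2 @ [\<infinity>]"
    using eq append_Cons_eq_iff[of "enat (Suc x)" L1 R1 "L2 @ [\<infinity>]" "\<infinity> # R2"]
    by (fastforce simp: insert_peak_def insert_valley_def)
  then have "w1 = L2 @ \<infinity> # \<infinity> # R1" using w1 by simp
  then show False
    using assms(1) not_alternating_infinity_infinity by (auto simp: slotted_words_def)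
qed

lemma qint_commute: "qint n q p = qint n p q"
proof -
  have "qint n q p = (\<Sum>i<n. q ^ (n - Suc i) * p ^ (n - 1 - (n - Suc i)))"
    unfolding qint_def by (rule sum.nat_diff_reindex[symmetric])
  also have "\<dots> = qint n p q"
    unfolding qint_def by (rule sum.cong) (auto simp: mult.commute)
  finally show ?thesis .
qed

lemma sum_slot_choices:
  fixes g :: "'b \<Rightarrow> 'a::comm_ring_1"
  assumes "finite A"
  shows "(\<Sum>(w, s)\<in>A \<times> {..<n}. g w * q ^ s * p ^ (n - 1 - s)) = qint n p q * sum g A"
proof -
  have "(\<Sum>(w, s)\<in>A \<times> {..<n}. g w * q ^ s * p ^ (n - 1 - s))
      = (\<Sum>w\<in>A. \<Sum>s<n. g w * q ^ s * p ^ (n - 1 - s))"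
    by (rule sum.cartesian_product[symmetric])
  also have "\<dots> = (\<Sum>w\<in>A. qint n q p * g w)"
    unfolding qint_def by (simp only: sum_distrib_left mult_ac)
  also have "\<dots> = qint n p q * sum g A"
    by (simp only: qint_commute sum_distrib_left)
  finally show ?thesis .
qed

lemma slotted_words_Suc:
  "slotted_words e (Suc x) k =
     (\<lambda>(w, s). insert_peak (Suc x) w s) ` (slotted_words e x (Suc k) \<times> {..<peak_slots e (Suc k)})
   \<union> (\<lambda>(w, s). insert_valley (Suc x) w s) ` (slotted_words e x (k - 1) \<times> {..<k - 1})"
  (is "?S = ?P \<union> ?V")
proof
  show "?S \<subseteq> ?P \<union> ?V"
  proof
    fix w' assume "w' \<in> ?S"
    then show "w' \<in> ?P \<union> ?V"
    proof (cases rule: slotted_words_Suc_cases)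
      case (peak w s)
      then show ?thesis by (intro UnI1 image_eqI[where x = "(w, s)"]) auto
    next
      case (valley w s)
      then show ?thesis by (intro UnI2 image_eqI[where x = "(w, s)"]) auto
    qed
  qed
  have "insert_valley (Suc x) w s \<in> ?S" if "w \<in> slotted_words e x (k - 1)" "s < k - 1" for w s
  proof -
    have "Suc (k - 1) = k" using that(2) by arith
    then show ?thesis using insert_valley_in_slotted_words[OF that] by simp
  qed
  then show "?P \<union> ?V \<subseteq> ?S"
    using insert_peak_in_slotted_words by auto
qed

lemma sum_slot_weight_insert_peak:
  "(\<Sum>w\<in>(\<lambda>(w, s). insert_peak (Suc x) w s) ` (slotted_words e x (Suc k) \<times> {..<peak_slots e (Suc k)}).
      slot_weight e p q w) = qint (peak_slots e (Suc k)) p q * slot_sum e p q x (Suc k)"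
proof -
  define n where "n = peak_slots e (Suc k)"
  have "n \<le> Suc k" by (simp add: n_def peak_slots_def)
  then have "slotted_words e x (Suc k) \<times> {..<n} \<subseteq> slotted_words e x (Suc k) \<times> {..<Suc k}" by auto
  note inj = inj_on_subset[OF inj_on_insert_peak this]
  have "(\<Sum>w\<in>(\<lambda>(w, s). insert_peak (Suc x) w s) ` (slotted_words e x (Suc k) \<times> {..<n}).
      slot_weight e p q w)
      = (\<Sum>(w, s)\<in>slotted_words e x (Suc k) \<times> {..<n}. slot_weight e p q (insert_peak (Suc x) w s))"
    by (subst sum.reindex[OF inj]) (simp add: comp_def split_beta)
  also have "\<dots> = (\<Sum>(w, s)\<in>slotted_words e x (Suc k) \<times> {..<n}. slot_weight e p q w * q ^ s * p ^ (n - 1 - s))"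
    by (rule sum.cong) (auto simp: n_def slot_weight_insert_peak)
  also have "\<dots> = qint n p q * slot_sum e p q x (Suc k)"
    unfolding slot_sum_def by (rule sum_slot_choices[OF finite_slotted_words])
  finally show ?thesis by (simp only: n_def)
qed

lemma sum_slot_weight_insert_valley:
  "(\<Sum>w\<in>(\<lambda>(w, s). insert_valley (Suc x) w s) ` (slotted_words e x k \<times> {..<k}). slot_weight e p q w)
    = qint k p q * slot_sum e p q x k"
proof -
  have "(\<Sum>w\<in>(\<lambda>(w, s). insert_valley (Suc x) w s) ` (slotted_words e x k \<times> {..<k}). slot_weight e p q w)
      = (\<Sum>(w, s)\<in>slotted_words e x k \<times> {..<k}. slot_weight e p q (insert_valley (Suc x) w s))"
    by (subst sum.reindex[OF inj_on_insert_valley]) (simp add: comp_def split_beta)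
  also have "\<dots> = (\<Sum>(w, s)\<in>slotted_words e x k \<times> {..<k}. slot_weight e p q w * q ^ s * p ^ (k - 1 - s))"
    by (rule sum.cong) (auto simp: slot_weight_insert_valley)
  also have "\<dots> = qint k p q * slot_sum e p q x k"
    unfolding slot_sum_def by (rule sum_slot_choices[OF finite_slotted_words])
  finally show ?thesis .
qed

lemma slot_sum_Suc:
  "slot_sum e p q (Suc x) k = (if k = 0 then 0 else qint (k - 1) p q * slot_sum e p q x (k - 1))
     + qint (peak_slots e (Suc k)) p q * slot_sum e p q x (Suc k)"
proof -
  let ?P = "(\<lambda>(w, s). insert_peak (Suc x) w s) ` (slotted_words e x (Suc k) \<times> {..<peak_slots e (Suc k)})"
  let ?V = "(\<lambda>(w, s). insert_valley (Suc x) w s) ` (slotted_words e x (k - 1) \<times> {..<k - 1})"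
  have "peak_slots e (Suc k) \<le> Suc k" by (simp add: peak_slots_def)
  then have "insert_peak (Suc x) w1 s1 \<noteq> insert_valley (Suc x) w2 s2"
    if "w1 \<in> slotted_words e x (Suc k)" "s1 < peak_slots e (Suc k)"
      "w2 \<in> slotted_words e x (k - 1)" "s2 < k - 1" for w1 s1 w2 s2
    using that by (intro insert_peak_neq_insert_valley[of w1 e x "Suc k" s1 w2 "k - 1" s2]) auto
  then have "?P \<inter> ?V = {}" by fastforce
  then have "slot_sum e p q (Suc x) k = sum (slot_weight e p q) ?P + sum (slot_weight e p q) ?V"
    unfolding slot_sum_def slotted_words_Suc
    by (intro sum.union_disjoint) (auto simp: finite_slotted_words)
  then show ?thesis
    by (simp add: sum_slot_weight_insert_peak sum_slot_weight_insert_valley qint_def)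
qed

lemma slot_sum_eq_path_weight:
  "slot_sum e p q x k = path_weight (\<lambda>j. qint j p q) (\<lambda>j. qint (peak_slots e j) p q) x k"
proof (induction x arbitrary: k)
  case 0
  show ?case by (simp add: slot_sum_def slotted_words_0 slot_weight_def)
next
  case (Suc x)
  show ?case by (simp add: slot_sum_Suc Suc.IH)
qed

lemma inj_enat: "inj enat"
  by (rule injI) simp

lemma falling_alt_iff_alternating: "falling_alt s \<longleftrightarrow> alternating True (map enat s)"
  unfolding falling_alt_def alternating_iff_nth by auto

lemma pat_31_2_eq_occurrences: "pat_31_2 s = occurrences is_31_2 (map enat s)"
  unfolding occurrences_def pat_31_2_def is_31_2_def
  by (intro arg_cong[where f = card]) auto

lemma pat_2_13_eq_occurrences: "pat_2_13 s = occurrences is_31_2 (rev (map enat s))"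
  unfolding occurrences_rev pat_2_13_def is_31_2_def
  by (intro arg_cong[where f = card]) auto

lemma pat_2_31_eq_occurrences: "pat_2_31 s = occurrences is_13_2 (rev (map enat s))"
  unfolding occurrences_rev pat_2_31_def is_13_2_def
  by (intro arg_cong[where f = card]) auto

lemma length_alt_perms: "s \<in> alt_perms m \<Longrightarrow> length s = m"
  unfolding alt_perms_def using distinct_card[of s] by auto

lemma finite_part_map_enat [simp]: "finite_part (map enat s) = map enat s"
  by (induction s) auto

lemma distinct_set_map_enat:
  assumes "distinct (map enat s)" "set (map enat s) = enat ` {1..m}"
  shows "distinct s" "set s = {1..m}"
  using assms by (auto simp: distinct_map inj_image_eq_iff[OF inj_enat])

lemma slotted_words_odd: "odd m \<Longrightarrow> slotted_words False m 0 = map enat ` alt_perms m"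
proof
  assume m: "odd m"
  show "slotted_words False m 0 \<subseteq> map enat ` alt_perms m"
  proof
    fix w assume w: "w \<in> slotted_words False m 0"
    then have "\<infinity> \<notin> set w" by (simp add: slotted_words_def count_list_0_iff)
    then obtain s where ws: "w = map enat s" by (metis ex_map_conv not_infinity_eq)
    have "s \<in> alt_perms m"
      using w distinct_set_map_enat[of s m] ws
      by (auto simp: slotted_words_def alt_perms_def falling_alt_iff_alternating)
    then show "w \<in> map enat ` alt_perms m" using ws by blast
  qed
  show "map enat ` alt_perms m \<subseteq> slotted_words False m 0"
  proof
    fix w assume "w \<in> map enat ` alt_perms m"
    then obtain s where s: "s \<in> alt_perms m" and ws: "w = map enat s" by blast
    have "count_list w \<infinity> = 0" using ws by (auto simp: count_list_0_iff)
    then show "w \<in> slotted_words False m 0" using s ws m length_alt_perms[OF s]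
      by (auto simp: slotted_words_def alt_perms_def falling_alt_iff_alternating distinct_map inj_on_def)
  qed
qed

lemma slotted_words_even:
  "even m \<Longrightarrow> slotted_words True m 1 = (\<lambda>s. map enat s @ [\<infinity>]) ` alt_perms m"
proof
  assume m: "even m"
  show "slotted_words True m 1 \<subseteq> (\<lambda>s. map enat s @ [\<infinity>]) ` alt_perms m"
  proof
    fix w assume w: "w \<in> slotted_words True m 1"
    then have "w \<noteq> []" "last w = \<infinity>" by (auto simp: slotted_words_def)
    then obtain v where wv: "w = v @ [\<infinity>]" by (metis append_butlast_last_id)
    then have "count_list v \<infinity> = 0" using w by (simp add: slotted_words_def)
    then have "\<infinity> \<notin> set v" by (simp add: count_list_0_iff)
    then obtain s where vs: "v = map enat s" by (metis ex_map_conv not_infinity_eq)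
    have "finite_part w = map enat s" using wv vs by simp
    moreover have "alternating True (map enat s)"
      using w wv vs alternating_snoc[of True "map enat s" \<infinity>] by (simp add: slotted_words_def)
    ultimately have "s \<in> alt_perms m"
      using w distinct_set_map_enat[of s m] by (auto simp: slotted_words_def alt_perms_def falling_alt_iff_alternating)
    then show "w \<in> (\<lambda>s. map enat s @ [\<infinity>]) ` alt_perms m" using wv vs by blast
  qed
  show "(\<lambda>s. map enat s @ [\<infinity>]) ` alt_perms m \<subseteq> slotted_words True m 1"
  proof
    fix w assume "w \<in> (\<lambda>s. map enat s @ [\<infinity>]) ` alt_perms m"
    then obtain s where s: "s \<in> alt_perms m" and ws: "w = map enat s @ [\<infinity>]" by blast
    have ls: "length s = m" by (rule length_alt_perms[OF s])
    have "count_list (map enat s) \<infinity> = 0" by (auto simp: count_list_0_iff)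
    then have cw: "count_list w \<infinity> = 1" using ws by simp
    have "alternating True (map enat s)" using s by (simp add: alt_perms_def falling_alt_iff_alternating)
    then have aw: "alternating True w" using ws ls m by (auto simp: alternating_snoc last_map)
    show "w \<in> slotted_words True m 1" using s ws cw aw m ls
      by (auto simp: slotted_words_def alt_perms_def distinct_map inj_on_def)
  qed
qed

lemma E_odd_eq_slot_sum: "odd m \<Longrightarrow> E m p q = slot_sum False p q m 0"
proof -
  assume m: "odd m"
  have "slot_sum False p q m 0 = (\<Sum>s\<in>alt_perms m. slot_weight False p q (map enat s))"
    unfolding slot_sum_def slotted_words_odd[OF m]
    by (rule sum.reindex[OF inj_on_subset[OF inj_mapI[OF inj_enat]], unfolded comp_def]) simp
  also have "\<dots> = (\<Sum>s\<in>alt_perms m. p ^ pat_2_13 s * q ^ pat_31_2 s)"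
    by (simp add: slot_weight_def pat_31_2_eq_occurrences pat_2_13_eq_occurrences mult.commute)
  finally show ?thesis using m by (simp add: E_def)
qed

lemma E_even_eq_slot_sum: "even m \<Longrightarrow> E m p q = slot_sum True p q m 1"
proof -
  assume m: "even m"
  have inj: "inj_on (\<lambda>s. map enat s @ [\<infinity>]) (alt_perms m)"
    by (rule inj_onI) (simp add: inj_map_eq_map[OF inj_enat])
  have "slot_sum True p q m 1 = (\<Sum>s\<in>alt_perms m. slot_weight True p q (map enat s @ [\<infinity>]))"
    unfolding slot_sum_def slotted_words_even[OF m] by (rule sum.reindex[OF inj, unfolded comp_def])
  also have "\<dots> = (\<Sum>s\<in>alt_perms m. p ^ pat_2_31 s * q ^ pat_31_2 s)"
  proof (rule sum.cong)
    fix s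
    have "occurrences is_31_2 (map enat s @ [\<infinity>]) = occurrences is_31_2 (map enat s)"
      using occurrences_snoc[of is_31_2 "map enat s" \<infinity>] adj_count_eq_0[where f = is_31_2, OF not_is_31_2_infinity]
      by simp
    moreover have "occurrences is_13_2 (\<infinity> # rev (map enat s)) = occurrences is_13_2 (rev (map enat s))"
      by (rule occurrences_Cons) (simp add: is_13_2_def)
    ultimately show "slot_weight True p q (map enat s @ [\<infinity>]) = p ^ pat_2_31 s * q ^ pat_31_2 s"
      by (simp add: slot_weight_def pat_31_2_eq_occurrences pat_2_31_eq_occurrences mult.commute)
  qed simp
  finally show ?thesis using m by (simp add: E_def)
qed

lemma E_odd_gf:
  fixes p q :: "'a::field"
  shows "Abs_fps (\<lambda>m. if odd m then E m p q else 0) = fps_X * cf_fps (\<lambda>j. qint j p q * qint (Suc j) p q) 1"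
proof -
  let ?u = "\<lambda>j. qint j p q"
  have "Abs_fps (\<lambda>m. if odd m then E m p q else 0) = Abs_fps (\<lambda>m. path_weight ?u ?u m 0)"
    by (rule fps_ext) (auto simp: E_odd_eq_slot_sum slot_sum_eq_path_weight path_weight_parity peak_slots_def)
  also have "\<dots> = path_gf ?u ?u 0"
    by (rule fps_ext) (simp add: path_gf_nth qint_def)
  finally show ?thesis by (simp add: path_gf_def qint_def)
qed

lemma E_even_gf:
  fixes p q :: "'a::field"
  shows "Abs_fps (\<lambda>m. if even m then E m p q else 0) = cf_fps (\<lambda>j. (qint j p q)\<^sup>2) 1"
proof -
  let ?u = "\<lambda>j. qint j p q" and ?d = "\<lambda>j. qint (j - 1) p q"
  have "Abs_fps (\<lambda>m. if even m then E m p q else 0) = Abs_fps (\<lambda>m. path_weight ?u ?d m 1)"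
    by (rule fps_ext) (auto simp: E_even_eq_slot_sum slot_sum_eq_path_weight path_weight_parity peak_slots_def)
  also have "\<dots> = path_gf ?u ?d 1"
    by (rule fps_ext) (simp add: path_gf_nth qint_def)
  finally show ?thesis by (simp add: path_gf_def power2_eq_square)
qed

theorem theorem2p1:
  fixes p q :: "'a::field"
  shows "((\<lambda>k. fps_X * cf_conv (\<lambda>i. qint (i+1) p q * qint (i+2) p q) k)
           \<longlonglongrightarrow> Abs_fps (\<lambda>m. if odd m then E m p q else 0))
       \<and> ((\<lambda>k. cf_conv (\<lambda>i. (qint (i+1) p q)\<^sup>2) k)
           \<longlonglongrightarrow> Abs_fps (\<lambda>m. if even m then E m p q else 0))"
proof
  let ?c = "\<lambda>j. qint j p q * qint (Suc j) p q"
  have "cf_fps ?c (Suc j) * (1 - fps_const (qint (j+1) p q * qint (j+2) p q) * fps_X^2 * cf_fps ?c (Suc (Suc j))) = 1"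
    for j using cf_fps_mult_eq_1[of ?c "Suc j"] by (simp add: numeral_2_eq_2)
  from tendsto_cf_conv(2)[of "\<lambda>j. cf_fps ?c (Suc j)", OF this]
  show "(\<lambda>k. fps_X * cf_conv (\<lambda>i. qint (i+1) p q * qint (i+2) p q) k)
      \<longlonglongrightarrow> Abs_fps (\<lambda>m. if odd m then E m p q else 0)"
    by (simp add: E_odd_gf)
  let ?c = "\<lambda>j. (qint j p q)\<^sup>2"
  have "cf_fps ?c (Suc j) * (1 - fps_const ((qint (j+1) p q)\<^sup>2) * fps_X^2 * cf_fps ?c (Suc (Suc j))) = 1"
    for j using cf_fps_mult_eq_1[of ?c "Suc j"] by simp
  from tendsto_cf_conv(1)[of "\<lambda>j. cf_fps ?c (Suc j)", OF this]
  show "(\<lambda>k. cf_conv (\<lambda>i. (qint (i+1) p q)\<^sup>2) k) \<longlonglongrightarrow> Abs_fps (\<lambda>m. if even m then E m p q else 0)"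
    by (simp add: E_even_gf)
qed

end
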